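(* Let $m,p,n$ be positive integers with $p\mid m$, $n>1$, and $G=G(m,p,n)$ acting on $\mathbb T^n$. (i) The commuting tuple $(M_{\theta_1},\ldots,M_{\theta_n})$ of multiplication operators on $L^2(\mathbb T^n)$ is a $\boldsymbol\Theta_n$-unitary. (ii) For every $\varrho\in\widehat G$, the restriction of $(M_{\theta_1},\ldots,M_{\theta_n})$ to $\mathbb P_\varrho\big(L^2(\mathbb T^n)\big)$ is a $\boldsymbol\Theta_n$-unitary.
   Context: $G(m,p,n)$ is the group of $n\times n$ monomial matrices with nonzero entries $m$-th roots of unity whose product is an $(m/p)$-th root of unity, acting by $\sigma\cdot z=\sigma^{-1}z$. $\theta_i(z)=s_i(z_1^m,\ldots,z_n^m)$ for $1\le i\le n-1$, $\theta_n(z)=(z_1\cdots z_n)^{m/p}$, $\boldsymbol\Theta_n=\boldsymbol\theta(\mathbb D^n)$, whose distinguished boundary is $\boldsymbol\theta(\mathbb T^n)$. A $\boldsymbol\Theta_n$-unitary is a commuting tuple of normal operators whose joint (Taylor) spectrum lies in the distinguished boundary of $\boldsymbol\Theta_n$. $L^2(\mathbb T^n)$ is taken with Lebesgue measure. $\widehat G$ is the set of equivalence classes of irreducible representations of $G$, $\chi_\varrho$ the character of $\varrho$, and $(\mathbb P_\varrho f)(z)=\frac{\deg\varrho}{|G|}\sum_{\sigma\in G}\chi_\varrho(\sigma^{-1})f(\sigma^{-1}\cdot z)$. *)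

theory Defs
  imports "HOL-Analysis.Analysis"
begin

text \<open>Points of C^n are extensional functions on the index set {1..n}.\<close>

definition torus :: "nat \<Rightarrow> (nat \<Rightarrow> complex) set" where
  "torus n = PiE {1..n} (\<lambda>_. sphere 0 1)"

definition circle_measure :: "complex measure" where
  "circle_measure = distr (lebesgue_on {0..<2*pi}) borel cis"

definition torus_measure :: "nat \<Rightarrow> (nat \<Rightarrow> complex) measure" where
  "torus_measure n = PiM {1..n} (\<lambda>_. circle_measure)"

section \<open>L^2 (as square integrable functions modulo a.e. equality)\<close>

definition L2 :: "'a measure \<Rightarrow> ('a \<Rightarrow> complex) set" where
  "L2 M = {f. f \<in> borel_measurable M \<and> integrable M (\<lambda>x. (cmod (f x))^2)}"

definition ae_eq :: "'a measure \<Rightarrow> ('a \<Rightarrow> complex) \<Rightarrow> ('a \<Rightarrow> complex) \<Rightarrow> bool" where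
  "ae_eq M f g = (AE x in M. f x = g x)"

definition L2_inner :: "'a measure \<Rightarrow> ('a \<Rightarrow> complex) \<Rightarrow> ('a \<Rightarrow> complex) \<Rightarrow> complex" where
  "L2_inner M f g = integral\<^sup>L M (\<lambda>x. f x * cnj (g x))"

definition L2_norm :: "'a measure \<Rightarrow> ('a \<Rightarrow> complex) \<Rightarrow> real" where
  "L2_norm M f = sqrt (integral\<^sup>L M (\<lambda>x. (cmod (f x))^2))"

definition bounded_op :: "'a measure \<Rightarrow> ('a \<Rightarrow> complex) set \<Rightarrow>
    (('a \<Rightarrow> complex) \<Rightarrow> ('a \<Rightarrow> complex)) \<Rightarrow> bool" where
  "bounded_op M H A \<longleftrightarrow>
     (\<forall>f\<in>H. A f \<in> H) \<and>
     (\<forall>f\<in>H. \<forall>g\<in>H. ae_eq M f g \<longrightarrow> ae_eq M (A f) (A g)) \<and>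
     (\<forall>f\<in>H. \<forall>g\<in>H. ae_eq M (A (\<lambda>x. f x + g x)) (\<lambda>x. A f x + A g x)) \<and>
     (\<forall>c. \<forall>f\<in>H. ae_eq M (A (\<lambda>x. c * f x)) (\<lambda>x. c * A f x)) \<and>
     (\<exists>C. \<forall>f\<in>H. L2_norm M (A f) \<le> C * L2_norm M f)"

definition normal_op :: "'a measure \<Rightarrow> ('a \<Rightarrow> complex) set \<Rightarrow>
    (('a \<Rightarrow> complex) \<Rightarrow> ('a \<Rightarrow> complex)) \<Rightarrow> bool" where
  "normal_op M H A \<longleftrightarrow> bounded_op M H A \<and>
     (\<exists>B. bounded_op M H B \<and>
          (\<forall>f\<in>H. \<forall>g\<in>H. L2_inner M (A f) g = L2_inner M f (B g)) \<and>
          (\<forall>f\<in>H. ae_eq M (A (B f)) (B (A f))))"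

definition commuting_tuple :: "'a measure \<Rightarrow> ('a \<Rightarrow> complex) set \<Rightarrow> nat \<Rightarrow>
    (nat \<Rightarrow> ('a \<Rightarrow> complex) \<Rightarrow> ('a \<Rightarrow> complex)) \<Rightarrow> bool" where
  "commuting_tuple M H n T \<longleftrightarrow>
     (\<forall>i\<in>{1..n}. \<forall>j\<in>{1..n}. \<forall>f\<in>H. ae_eq M (T i (T j f)) (T j (T i f)))"

text \<open>A k-cochain of the Koszul complex of (T_1 - l_1, ..., T_n - l_n) on H:
  a family of elements of H indexed by the k-element subsets of {1..n}
  (i.e. an element of the k-th exterior power of C^n tensored with H).\<close>
definition cochain :: "('a \<Rightarrow> complex) set \<Rightarrow> nat \<Rightarrow> nat \<Rightarrow> (nat set \<Rightarrow> ('a \<Rightarrow> complex)) \<Rightarrow> bool" where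
  "cochain H n k \<omega> \<longleftrightarrow> (\<forall>S. S \<subseteq> {1..n} \<and> card S = k \<longrightarrow> \<omega> S \<in> H)"

definition koszul_d :: "(nat \<Rightarrow> ('a \<Rightarrow> complex) \<Rightarrow> ('a \<Rightarrow> complex)) \<Rightarrow> (nat \<Rightarrow> complex) \<Rightarrow>
    (nat set \<Rightarrow> ('a \<Rightarrow> complex)) \<Rightarrow> nat set \<Rightarrow> ('a \<Rightarrow> complex)" where
  "koszul_d T l \<omega> S = (\<lambda>x. \<Sum>j\<in>S. (-1) ^ card {i\<in>S. i < j} *
        (T j (\<omega> (S - {j})) x - l j * \<omega> (S - {j}) x))"

definition koszul_exact_at :: "'a measure \<Rightarrow> ('a \<Rightarrow> complex) set \<Rightarrow> nat \<Rightarrow>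
    (nat \<Rightarrow> ('a \<Rightarrow> complex) \<Rightarrow> ('a \<Rightarrow> complex)) \<Rightarrow> (nat \<Rightarrow> complex) \<Rightarrow> nat \<Rightarrow> bool" where
  "koszul_exact_at M H n T l k \<longleftrightarrow>
     (\<forall>\<omega>. cochain H n k \<omega> \<and>
          (\<forall>S. S \<subseteq> {1..n} \<and> card S = k + 1 \<longrightarrow> ae_eq M (koszul_d T l \<omega> S) (\<lambda>_. 0))
      \<longrightarrow> (if k = 0 then ae_eq M (\<omega> {}) (\<lambda>_. 0)
           else (\<exists>\<eta>. cochain H n (k - 1) \<eta> \<and>
                   (\<forall>S. S \<subseteq> {1..n} \<and> card S = k \<longrightarrow> ae_eq M (koszul_d T l \<eta> S) (\<omega> S)))))"

definition taylor_spectrum :: "'a measure \<Rightarrow> ('a \<Rightarrow> complex) set \<Rightarrow> nat \<Rightarrow>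
    (nat \<Rightarrow> ('a \<Rightarrow> complex) \<Rightarrow> ('a \<Rightarrow> complex)) \<Rightarrow> (nat \<Rightarrow> complex) set" where
  "taylor_spectrum M H n T =
     {l \<in> extensional {1..n}. \<exists>k\<le>n. \<not> koszul_exact_at M H n T l k}"

definition theta :: "nat \<Rightarrow> nat \<Rightarrow> nat \<Rightarrow> nat \<Rightarrow> (nat \<Rightarrow> complex) \<Rightarrow> complex" where
  "theta m p n i z =
     (if i = n then (\<Prod>j\<in>{1..n}. z j) ^ (m div p)
      else (\<Sum>S\<in>{S. S \<subseteq> {1..n} \<and> card S = i}. \<Prod>j\<in>S. z j ^ m))"

definition theta_map :: "nat \<Rightarrow> nat \<Rightarrow> nat \<Rightarrow> (nat \<Rightarrow> complex) \<Rightarrow> (nat \<Rightarrow> complex)" where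
  "theta_map m p n z = restrict (\<lambda>i. theta m p n i z) {1..n}"

text \<open>Distinguished boundary of Theta_n = theta(D^n): the set theta(T^n).\<close>
definition dist_boundary :: "nat \<Rightarrow> nat \<Rightarrow> nat \<Rightarrow> (nat \<Rightarrow> complex) set" where
  "dist_boundary m p n = theta_map m p n ` torus n"

definition Theta_unitary :: "nat \<Rightarrow> nat \<Rightarrow> nat \<Rightarrow> 'a measure \<Rightarrow> ('a \<Rightarrow> complex) set \<Rightarrow>
    (nat \<Rightarrow> ('a \<Rightarrow> complex) \<Rightarrow> ('a \<Rightarrow> complex)) \<Rightarrow> bool" where
  "Theta_unitary m p n M H T \<longleftrightarrow>
     (\<forall>j\<in>{1..n}. normal_op M H (T j)) \<and> commuting_tuple M H n T \<and>
     taylor_spectrum M H n T \<subseteq> dist_boundary m p n"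

definition mult_op :: "('a \<Rightarrow> complex) \<Rightarrow> ('a \<Rightarrow> complex) \<Rightarrow> ('a \<Rightarrow> complex)" where
  "mult_op \<phi> f = (\<lambda>x. \<phi> x * f x)"

section \<open>The group G(m,p,n) as n x n matrices (functions on {1..n}^2)\<close>

definition mmult :: "nat \<Rightarrow> (nat \<Rightarrow> nat \<Rightarrow> complex) \<Rightarrow> (nat \<Rightarrow> nat \<Rightarrow> complex) \<Rightarrow> (nat \<Rightarrow> nat \<Rightarrow> complex)" where
  "mmult n A B = (\<lambda>i j. if i \<in> {1..n} \<and> j \<in> {1..n} then \<Sum>k\<in>{1..n}. A i k * B k j else 0)"

definition idm :: "nat \<Rightarrow> (nat \<Rightarrow> nat \<Rightarrow> complex)" where
  "idm n = (\<lambda>i j. if i \<in> {1..n} \<and> j = i then 1 else 0)"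

definition mvec :: "nat \<Rightarrow> (nat \<Rightarrow> nat \<Rightarrow> complex) \<Rightarrow> (nat \<Rightarrow> complex) \<Rightarrow> (nat \<Rightarrow> complex)" where
  "mvec n A z = restrict (\<lambda>i. \<Sum>j\<in>{1..n}. A i j * z j) {1..n}"

definition Gmpn :: "nat \<Rightarrow> nat \<Rightarrow> nat \<Rightarrow> (nat \<Rightarrow> nat \<Rightarrow> complex) set" where
  "Gmpn m p n = {A. \<exists>\<pi> \<zeta>. \<pi> permutes {1..n} \<and> (\<forall>i\<in>{1..n}. \<zeta> i ^ m = 1) \<and>
       (\<Prod>i\<in>{1..n}. \<zeta> i) ^ (m div p) = 1 \<and>
       A = (\<lambda>i j. if i \<in> {1..n} \<and> j = \<pi> i then \<zeta> i else 0)}"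

definition ginv :: "nat \<Rightarrow> (nat \<Rightarrow> nat \<Rightarrow> complex) set \<Rightarrow> (nat \<Rightarrow> nat \<Rightarrow> complex) \<Rightarrow> (nat \<Rightarrow> nat \<Rightarrow> complex)" where
  "ginv n G \<sigma> = (THE \<tau>. \<tau> \<in> G \<and> mmult n \<sigma> \<tau> = idm n)"

definition gact :: "nat \<Rightarrow> (nat \<Rightarrow> nat \<Rightarrow> complex) set \<Rightarrow> (nat \<Rightarrow> nat \<Rightarrow> complex) \<Rightarrow> (nat \<Rightarrow> complex) \<Rightarrow> (nat \<Rightarrow> complex)" where
  "gact n G \<sigma> z = mvec n (ginv n G \<sigma>) z"

section \<open>Irreducible complex representations of G on C^d (d = CARD('d))\<close>

definition is_irrep :: "nat \<Rightarrow> (nat \<Rightarrow> nat \<Rightarrow> complex) set \<Rightarrow>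
    ((nat \<Rightarrow> nat \<Rightarrow> complex) \<Rightarrow> complex^'d^'d) \<Rightarrow> bool" where
  "is_irrep n G \<rho> \<longleftrightarrow>
     (\<forall>\<sigma>\<in>G. \<forall>\<tau>\<in>G. \<rho> (mmult n \<sigma> \<tau>) = \<rho> \<sigma> ** \<rho> \<tau>) \<and>
     (\<forall>\<sigma>\<in>G. invertible (\<rho> \<sigma>)) \<and>
     (\<forall>W :: (complex^'d) set.
        (0 \<in> W \<and> (\<forall>x\<in>W. \<forall>y\<in>W. x + y \<in> W) \<and> (\<forall>c. \<forall>x\<in>W. c *s x \<in> W) \<and>
         (\<forall>\<sigma>\<in>G. \<forall>x\<in>W. \<rho> \<sigma> *v x \<in> W)) \<longrightarrow> W = {0} \<or> W = UNIV)"

definition character :: "((nat \<Rightarrow> nat \<Rightarrow> complex) \<Rightarrow> complex^'d^'d) \<Rightarrow> (nat \<Rightarrow> nat \<Rightarrow> complex) \<Rightarrow> complex" where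
  "character \<rho> \<sigma> = trace (\<rho> \<sigma>)"

definition isotypic_proj :: "nat \<Rightarrow> (nat \<Rightarrow> nat \<Rightarrow> complex) set \<Rightarrow>
    ((nat \<Rightarrow> nat \<Rightarrow> complex) \<Rightarrow> complex^'d^'d) \<Rightarrow> ((nat \<Rightarrow> complex) \<Rightarrow> complex) \<Rightarrow> ((nat \<Rightarrow> complex) \<Rightarrow> complex)" where
  "isotypic_proj n G \<rho> f = (\<lambda>z. (of_nat CARD('d) / of_nat (card G)) *
      (\<Sum>\<sigma>\<in>G. character \<rho> (ginv n G \<sigma>) * f (gact n G (ginv n G \<sigma>) z)))"

text \<open>The range P_rho(L^2(T^n)), as a set of representatives (closed under a.e. equality).\<close>
definition isotypic_range :: "nat \<Rightarrow> (nat \<Rightarrow> nat \<Rightarrow> complex) set \<Rightarrow>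
    ((nat \<Rightarrow> nat \<Rightarrow> complex) \<Rightarrow> complex^'d^'d) \<Rightarrow> ((nat \<Rightarrow> complex) \<Rightarrow> complex) set" where
  "isotypic_range n G \<rho> =
     {g \<in> L2 (torus_measure n). \<exists>f\<in>L2 (torus_measure n).
        ae_eq (torus_measure n) g (isotypic_proj n G \<rho> f)}"

end

theory Submission
  imports Defs
begin

(* The theorem holds for every subspace H of L^2(T^n) that contains 0, is closed under addition
   and under multiplication by bounded measurable functions of theta.  Multiplication by theta_i
   is then normal, with adjoint multiplication by the conjugate of theta_i.  If l is not in
   theta(T^n), then N = sum_j |theta_j - l_j|^2 has no zero on the compact torus, so the
   functions b_j = conj (theta_j - l_j) / N are bounded functions of theta with
   sum_j (theta_j - l_j) b_j = 1; contraction with b is then a homotopy between the identity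
   and zero on the Koszul complex, which is therefore exact at l.  L^2(T^n) is such a subspace,
   and so is P_rho(L^2(T^n)): the theta_i are invariant under G(m,p,n), hence P_rho commutes
   with multiplication by functions of theta. *)

section \<open>Square integrable functions and multiplication operators\<close>

lemma borel_measurable_cnj [measurable]:
  "f \<in> borel_measurable M \<Longrightarrow> (\<lambda>x. cnj (f x)) \<in> borel_measurable M"
  by (rule borel_measurable_continuous_on[OF continuous_on_cnj[OF continuous_on_id]])

lemma L2_zero: "(\<lambda>_. 0) \<in> L2 M"
  unfolding L2_def by simp

lemma L2_add:
  assumes "f \<in> L2 M" and "g \<in> L2 M"
  shows "(\<lambda>x. f x + g x) \<in> L2 M"
proof -
  have [measurable]: "f \<in> borel_measurable M" "g \<in> borel_measurable M"
    and "integrable M (\<lambda>x. (cmod (f x))\<^sup>2)" "integrable M (\<lambda>x. (cmod (g x))\<^sup>2)"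
    using assms unfolding L2_def by blast+
  then have bound: "integrable M (\<lambda>x. 2 * (cmod (f x))\<^sup>2 + 2 * (cmod (g x))\<^sup>2)"
    by auto
  have "(cmod (f x + g x))\<^sup>2 \<le> 2 * (cmod (f x))\<^sup>2 + 2 * (cmod (g x))\<^sup>2" for x
  proof -
    have "(cmod (f x + g x))\<^sup>2 \<le> (cmod (f x) + cmod (g x))\<^sup>2"
      by (intro power_mono norm_triangle_ineq) simp
    also have "\<dots> \<le> 2 * (cmod (f x))\<^sup>2 + 2 * (cmod (g x))\<^sup>2"
      using sum_squares_ge_zero[of "cmod (f x) - cmod (g x)" 0] by (simp add: power2_eq_square algebra_simps)
    finally show ?thesis .
  qed
  then have "integrable M (\<lambda>x. (cmod (f x + g x))\<^sup>2)"
    by (intro Bochner_Integration.integrable_bound[OF bound]) auto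
  then show ?thesis
    unfolding L2_def by simp
qed

lemma norm_mult_square_le:
  assumes "cmod a \<le> C"
  shows "(cmod (a * b))\<^sup>2 \<le> C\<^sup>2 * (cmod b)\<^sup>2"
proof -
  have "(cmod a)\<^sup>2 \<le> C\<^sup>2"
    using assms by (intro power_mono) auto
  then show ?thesis
    by (simp add: norm_mult power_mult_distrib mult_right_mono)
qed

lemma L2_mult:
  assumes "f \<in> L2 M" and [measurable]: "\<phi> \<in> borel_measurable M"
    and bound: "AE x in M. cmod (\<phi> x) \<le> C"
  shows "(\<lambda>x. \<phi> x * f x) \<in> L2 M"
proof -
  have [measurable]: "f \<in> borel_measurable M" and "integrable M (\<lambda>x. (cmod (f x))\<^sup>2)"
    using assms(1) unfolding L2_def by blast+
  then have int: "integrable M (\<lambda>x. C\<^sup>2 * (cmod (f x))\<^sup>2)"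
    by simp
  have "AE x in M. norm ((cmod (\<phi> x * f x))\<^sup>2) \<le> norm (C\<^sup>2 * (cmod (f x))\<^sup>2)"
    using bound by eventually_elim (simp add: norm_mult_square_le)
  then have "integrable M (\<lambda>x. (cmod (\<phi> x * f x))\<^sup>2)"
    by (intro Bochner_Integration.integrable_bound[OF int]) simp_all
  then show ?thesis
    unfolding L2_def by simp
qed

lemma L2_norm_mult_le:
  assumes "f \<in> L2 M" and "(\<lambda>x. \<phi> x * f x) \<in> L2 M"
    and bound: "AE x in M. cmod (\<phi> x) \<le> C" and "0 \<le> C"
  shows "L2_norm M (\<lambda>x. \<phi> x * f x) \<le> C * L2_norm M f"
proof -
  have f: "integrable M (\<lambda>x. (cmod (f x))\<^sup>2)" and "integrable M (\<lambda>x. (cmod (\<phi> x * f x))\<^sup>2)"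
    using assms(1,2) unfolding L2_def by blast+
  then have "(\<integral>x. (cmod (\<phi> x * f x))\<^sup>2 \<partial>M) \<le> (\<integral>x. C\<^sup>2 * (cmod (f x))\<^sup>2 \<partial>M)"
    using bound by (intro integral_mono_AE) (auto elim!: eventually_mono simp: norm_mult_square_le)
  also have "\<dots> = C\<^sup>2 * (\<integral>x. (cmod (f x))\<^sup>2 \<partial>M)"
    by simp
  finally have "sqrt (\<integral>x. (cmod (\<phi> x * f x))\<^sup>2 \<partial>M) \<le> sqrt (C\<^sup>2 * (\<integral>x. (cmod (f x))\<^sup>2 \<partial>M))"
    by (rule real_sqrt_le_mono)
  then show ?thesis
    unfolding L2_norm_def using \<open>0 \<le> C\<close> by (simp add: real_sqrt_mult)
qed

lemma bounded_op_mult_op: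
  assumes "H \<subseteq> L2 M" and closed: "\<And>f. f \<in> H \<Longrightarrow> mult_op \<phi> f \<in> H"
    and bound: "AE x in M. cmod (\<phi> x) \<le> C"
  shows "bounded_op M H (mult_op \<phi>)"
proof -
  have bound': "AE x in M. cmod (\<phi> x) \<le> max C 0"
    using bound by eventually_elim simp
  have "\<forall>f\<in>H. L2_norm M (mult_op \<phi> f) \<le> max C 0 * L2_norm M f"
    using L2_norm_mult_le[OF _ _ bound'] closed assms(1) by (auto simp: mult_op_def)
  moreover have "\<forall>f\<in>H. \<forall>g\<in>H. ae_eq M f g \<longrightarrow> ae_eq M (mult_op \<phi> f) (mult_op \<phi> g)"
    unfolding ae_eq_def mult_op_def by (auto elim!: eventually_mono)
  moreover have "\<forall>f\<in>H. \<forall>g\<in>H. ae_eq M (mult_op \<phi> (\<lambda>x. f x + g x)) (\<lambda>x. mult_op \<phi> f x + mult_op \<phi> g x)"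
    and "\<forall>c. \<forall>f\<in>H. ae_eq M (mult_op \<phi> (\<lambda>x. c * f x)) (\<lambda>x. c * mult_op \<phi> f x)"
    by (simp_all add: ae_eq_def mult_op_def algebra_simps)
  ultimately show ?thesis
    unfolding bounded_op_def using closed by blast
qed

lemma normal_op_mult_op:
  assumes "H \<subseteq> L2 M" and "\<And>f. f \<in> H \<Longrightarrow> mult_op \<phi> f \<in> H"
    and "\<And>f. f \<in> H \<Longrightarrow> mult_op (\<lambda>x. cnj (\<phi> x)) f \<in> H"
    and bound: "AE x in M. cmod (\<phi> x) \<le> C"
  shows "normal_op M H (mult_op \<phi>)"
proof -
  have "AE x in M. cmod (cnj (\<phi> x)) \<le> C"
    using bound by simp
  then have "bounded_op M H (mult_op (\<lambda>x. cnj (\<phi> x)))"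
    using assms(1,3) by (intro bounded_op_mult_op) auto
  moreover have "bounded_op M H (mult_op \<phi>)"
    by (rule bounded_op_mult_op[OF assms(1,2) bound])
  ultimately show ?thesis
    unfolding normal_op_def
    by (intro conjI exI[of _ "mult_op (\<lambda>x. cnj (\<phi> x))"])
       (auto simp: L2_inner_def ae_eq_def mult_op_def mult_ac)
qed

section \<open>The Koszul complex of a multiplication tuple\<close>

(* Scalar cochains: \<omega> S is the coefficient of e_S.  Then koszul_wedge a is exterior multiplication
   by the sum of the a_j e_j, and koszul_contraction U b is interior multiplication by the sum of
   the b_i e_i^*, i in U. *)

definition koszul_sign :: "nat \<Rightarrow> nat set \<Rightarrow> complex" where
  "koszul_sign j S = (-1) ^ card {i \<in> S. i < j}"

definition koszul_wedge :: "(nat \<Rightarrow> complex) \<Rightarrow> (nat set \<Rightarrow> complex) \<Rightarrow> nat set \<Rightarrow> complex" where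
  "koszul_wedge a \<omega> S = (\<Sum>j\<in>S. koszul_sign j S * (a j * \<omega> (S - {j})))"

definition koszul_contraction ::
    "nat set \<Rightarrow> (nat \<Rightarrow> complex) \<Rightarrow> (nat set \<Rightarrow> complex) \<Rightarrow> nat set \<Rightarrow> complex" where
  "koszul_contraction U b \<omega> R = (\<Sum>i\<in>U - R. koszul_sign i (insert i R) * (b i * \<omega> (insert i R)))"

lemma koszul_sign_insert:
  assumes "finite S" and "t \<notin> S"
  shows "koszul_sign j (insert t S) = (if t < j then - koszul_sign j S else koszul_sign j S)"
proof -
  have "{i \<in> insert t S. i < j} = (if t < j then insert t {i \<in> S. i < j} else {i \<in> S. i < j})"
    by auto
  then show ?thesis
    using assms by (simp add: koszul_sign_def)
qed

lemma koszul_sign_square: "koszul_sign j S * koszul_sign j S = 1"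
  by (simp add: koszul_sign_def flip: power_mult_distrib)

lemma koszul_sign_exchange:
  assumes "finite S" and "j \<in> S" and "i \<notin> S"
  shows "koszul_sign j S * koszul_sign i (insert i (S - {j})) =
         - (koszul_sign i (insert i S) * koszul_sign j (insert i S))"
proof -
  define P where "P = S - {j}"
  have P: "finite P" "j \<notin> P" "i \<notin> P" "i \<noteq> j" and S: "S = insert j P"
    using assms by (auto simp: P_def)
  have "koszul_sign j S = koszul_sign j P" "koszul_sign i (insert i P) = koszul_sign i P"
    "koszul_sign i (insert i S) = (if j < i then - koszul_sign i P else koszul_sign i P)"
    "koszul_sign j (insert i S) = (if i < j then - koszul_sign j P else koszul_sign j P)"
    using P unfolding S by (simp_all add: koszul_sign_insert insert_commute)
  then show ?thesis
    using \<open>i \<noteq> j\<close> by (auto simp: P_def[symmetric] linorder_neq_iff)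
qed

lemma koszul_contraction_remove:
  assumes "finite U" and "S \<subseteq> U" and "j \<in> S"
  shows "koszul_contraction U b \<omega> (S - {j}) = koszul_sign j S * (b j * \<omega> S) +
    (\<Sum>i\<in>U - S. koszul_sign i (insert i (S - {j})) * (b i * \<omega> (insert i (S - {j}))))"
proof -
  have "U - (S - {j}) = insert j (U - S)" and "insert j (S - {j}) = S"
    using assms(2,3) by auto
  then show ?thesis
    using assms(1,3) by (simp add: koszul_contraction_def)
qed

lemma koszul_wedge_insert:
  assumes "finite S" and "i \<notin> S"
  shows "koszul_wedge a \<omega> (insert i S) = koszul_sign i (insert i S) * (a i * \<omega> S) +
    (\<Sum>j\<in>S. koszul_sign j (insert i S) * (a j * \<omega> (insert i (S - {j}))))"
proof -
  have "insert i S - {i} = S" and "\<And>j. j \<in> S \<Longrightarrow> insert i S - {j} = insert i (S - {j})"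
    using assms(2) by auto
  then show ?thesis
    using assms by (simp add: koszul_wedge_def)
qed

lemma koszul_homotopy_formula:
  assumes U: "finite U" and SU: "S \<subseteq> U"
  shows "koszul_wedge a (koszul_contraction U b \<omega>) S + koszul_contraction U b (koszul_wedge a \<omega>) S
         = (\<Sum>j\<in>U. a j * b j) * \<omega> S"
proof -
  have S: "finite S"
    using U SU by (rule finite_subset[rotated])
  define X where "X j i = koszul_sign j S * koszul_sign i (insert i (S - {j})) * a j * b i *
    \<omega> (insert i (S - {j}))" for j i
  have wedge_term: "koszul_sign j S * (a j * koszul_contraction U b \<omega> (S - {j}))
      = a j * b j * \<omega> S + (\<Sum>i\<in>U - S. X j i)" if "j \<in> S" for j
    using koszul_contraction_remove[OF U SU that] koszul_sign_square[of j S]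
    by (simp add: X_def algebra_simps sum_distrib_left)
  have "X j i = - (koszul_sign i (insert i S) * koszul_sign j (insert i S) * a j * b i *
      \<omega> (insert i (S - {j})))" if "j \<in> S" "i \<in> U - S" for i j
    using koszul_sign_exchange[OF S that(1), of i] that(2) by (simp add: X_def)
  then have contraction_term: "koszul_sign i (insert i S) * (b i * koszul_wedge a \<omega> (insert i S))
      = a i * b i * \<omega> S - (\<Sum>j\<in>S. X j i)" if "i \<in> U - S" for i
    using that koszul_wedge_insert[OF S, of i] koszul_sign_square[of i "insert i S"]
    by (simp add: algebra_simps sum_distrib_left sum_negf)
  have "koszul_wedge a (koszul_contraction U b \<omega>) S + koszul_contraction U b (koszul_wedge a \<omega>) S
      = (\<Sum>j\<in>S. a j * b j * \<omega> S) + (\<Sum>i\<in>U - S. a i * b i * \<omega> S)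
        + ((\<Sum>j\<in>S. \<Sum>i\<in>U - S. X j i) - (\<Sum>i\<in>U - S. \<Sum>j\<in>S. X j i))"
    unfolding koszul_wedge_def[of a "koszul_contraction U b \<omega>"]
      koszul_contraction_def[of U b "koszul_wedge a \<omega>"]
    by (simp add: wedge_term contraction_term sum.distrib sum_subtractf)
  also have "\<dots> = (\<Sum>j\<in>U. a j * b j) * \<omega> S"
    using sum.subset_diff[OF SU U, of "\<lambda>j. a j * b j"] sum.swap[of "\<lambda>i j. X j i" S "U - S"]
    by (simp add: sum_distrib_right distrib_right add.commute)
  finally show ?thesis .
qed

lemma koszul_d_mult_op:
  "koszul_d (\<lambda>i. mult_op (\<theta> i)) l \<omega> S x = koszul_wedge (\<lambda>j. \<theta> j x - l j) (\<lambda>R. \<omega> R x) S"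
  unfolding koszul_d_def koszul_wedge_def koszul_sign_def mult_op_def by (simp add: algebra_simps)

lemma sum_fun_closed:
  assumes "(\<lambda>_. 0) \<in> H" and "\<And>f g. f \<in> H \<Longrightarrow> g \<in> H \<Longrightarrow> (\<lambda>x. f x + g x) \<in> H"
    and "finite I" and "\<And>i. i \<in> I \<Longrightarrow> f i \<in> H"
  shows "(\<lambda>x. \<Sum>i\<in>I. f i x) \<in> H"
  using assms(3,4) by (induction I rule: finite_induct) (simp_all add: assms(1,2))

lemma koszul_d_mult_op_contraction:
  assumes bezout: "AE x in M. (\<Sum>j\<in>{1..n}. (\<theta> j x - l j) * b j x) = 1"
    and closed: "\<And>S. S \<subseteq> {1..n} \<Longrightarrow> card S = k + 1 \<Longrightarrow>
      ae_eq M (koszul_d (\<lambda>i. mult_op (\<theta> i)) l \<omega> S) (\<lambda>_. 0)"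
    and S: "S \<subseteq> {1..n}" "card S = k"
  shows "ae_eq M (koszul_d (\<lambda>i. mult_op (\<theta> i)) l
    (\<lambda>R x. koszul_contraction {1..n} (\<lambda>j. b j x) (\<lambda>R. \<omega> R x) R) S) (\<omega> S)"
proof -
  have "finite S"
    using S(1) finite_subset by blast
  then have "\<forall>i\<in>{1..n} - S. AE x in M. koszul_d (\<lambda>i. mult_op (\<theta> i)) l \<omega> (insert i S) x = 0"
    using closed S unfolding ae_eq_def by auto
  then have "AE x in M. \<forall>i\<in>{1..n} - S. koszul_d (\<lambda>i. mult_op (\<theta> i)) l \<omega> (insert i S) x = 0"
    by (subst AE_finite_all) auto
  with bezout show ?thesis
    unfolding ae_eq_def
  proof eventually_elim
    case (elim x)
    show ?case
      using koszul_homotopy_formula[OF _ S(1), of "\<lambda>j. \<theta> j x - l j" "\<lambda>j. b j x" "\<lambda>R. \<omega> R x"] elim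
      by (simp add: koszul_d_mult_op koszul_contraction_def[of _ _ "koszul_wedge _ _"])
  qed
qed

lemma koszul_exact_at_mult_op:
  fixes H :: "('a \<Rightarrow> complex) set"
  assumes zero: "(\<lambda>_. 0) \<in> H"
    and add: "\<And>f g. f \<in> H \<Longrightarrow> g \<in> H \<Longrightarrow> (\<lambda>x. f x + g x) \<in> H"
    and scale: "\<And>c f. f \<in> H \<Longrightarrow> (\<lambda>x. c * f x) \<in> H"
    and mult: "\<And>j f. j \<in> {1..n} \<Longrightarrow> f \<in> H \<Longrightarrow> (\<lambda>x. b j x * f x) \<in> H"
    and bezout: "AE x in M. (\<Sum>j\<in>{1..n}. (\<theta> j x - l j) * b j x) = 1"
  shows "koszul_exact_at M H n (\<lambda>i. mult_op (\<theta> i)) l k"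
  unfolding koszul_exact_at_def
proof (intro allI impI, elim conjE)
  fix \<omega> assume cocycle: "cochain H n k \<omega>"
    and closed: "\<forall>S. S \<subseteq> {1..n} \<and> card S = k + 1 \<longrightarrow>
      ae_eq M (koszul_d (\<lambda>i. mult_op (\<theta> i)) l \<omega> S) (\<lambda>_. 0)"
  define \<eta> where "\<eta> R x = koszul_contraction {1..n} (\<lambda>j. b j x) (\<lambda>R. \<omega> R x) R" for R x
  have homotopy: "ae_eq M (koszul_d (\<lambda>i. mult_op (\<theta> i)) l \<eta> S) (\<omega> S)"
    if "S \<subseteq> {1..n}" "card S = k" for S
    unfolding \<eta>_def using bezout closed that by (intro koszul_d_mult_op_contraction) auto
  show "if k = 0 then ae_eq M (\<omega> {}) (\<lambda>_. 0)
        else \<exists>\<eta>. cochain H n (k - 1) \<eta> \<and>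
          (\<forall>S. S \<subseteq> {1..n} \<and> card S = k \<longrightarrow> ae_eq M (koszul_d (\<lambda>i. mult_op (\<theta> i)) l \<eta> S) (\<omega> S))"
  proof (cases "k = 0")
    case True
    have "koszul_d (\<lambda>i. mult_op (\<theta> i)) l \<eta> {} = (\<lambda>_. 0)"
      by (simp add: koszul_d_def)
    then have "AE x in M. 0 = \<omega> {} x"
      using True homotopy[of "{}"] by (simp add: ae_eq_def)
    then show ?thesis
      using True by (auto simp: ae_eq_def elim!: eventually_mono)
  next
    case False
    have "\<eta> R \<in> H" if R: "R \<subseteq> {1..n}" "card R = k - 1" for R
    proof -
      have "\<omega> (insert i R) \<in> H" if "i \<in> {1..n} - R" for i
        using cocycle R that False finite_subset[OF R(1)] unfolding cochain_def by auto
      then show ?thesis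
        unfolding \<eta>_def[abs_def] koszul_contraction_def
        by (intro sum_fun_closed[OF zero add] scale mult) auto
    qed
    then show ?thesis
      using False homotopy unfolding cochain_def by auto
  qed
qed

section \<open>The torus\<close>

lemma (in product_sigma_finite) AE_PiM_component_finite:
  assumes "finite I" and "i \<in> I" and "AE x in M i. P x"
  shows "AE x in PiM I M. P (x i)"
proof -
  obtain N where N: "{x \<in> space (M i). \<not> P x} \<subseteq> N" "N \<in> sets (M i)" "emeasure (M i) N = 0"
    using assms(3) by (auto elim!: AE_E)
  define A where "A j = (if j = i then N else space (M j))" for j
  show ?thesis
  proof (rule AE_I)
    show "{x \<in> space (PiM I M). \<not> P (x i)} \<subseteq> PiE I A"
      using N(1) assms(2) by (auto simp: space_PiM A_def PiE_iff extensional_def)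
    show "PiE I A \<in> sets (PiM I M)"
      using assms(1) N(2) by (auto intro!: sets_PiM_I_finite simp: A_def)
    show "emeasure (PiM I M) (PiE I A) = 0"
      using assms(1,2) N(2,3) by (subst emeasure_PiM) (auto simp: A_def intro!: prod_zero bexI[of _ i])
  qed
qed

lemma sets_circle_measure [simp]: "sets circle_measure = sets borel"
  by (simp add: circle_measure_def)

lemma cis_measurable_lebesgue_on: "cis \<in> borel_measurable (lebesgue_on {0..<2*pi})"
  by (intro continuous_imp_measurable_on_sets_lebesgue continuous_intros) auto

lemma finite_measure_circle_measure: "finite_measure circle_measure"
  unfolding circle_measure_def
  by (intro finite_measure.finite_measure_distr cis_measurable_lebesgue_on
      finite_measure_lebesgue_on bounded_set_imp_lmeasurable) auto

lemma AE_circle_measure: "AE z in circle_measure. z \<in> sphere 0 1"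
  unfolding circle_measure_def
  by (subst AE_distr_iff[OF cis_measurable_lebesgue_on]) auto

lemma AE_torus_measure: "AE z in torus_measure n. z \<in> torus n"
proof -
  interpret product_sigma_finite "\<lambda>_. circle_measure"
    unfolding product_sigma_finite_def using finite_measure_circle_measure finite_measure.axioms(1) by blast
  have "AE z in torus_measure n. \<forall>i\<in>{1..n}. z i \<in> sphere 0 1"
    unfolding torus_measure_def
    by (intro AE_finite_allI AE_PiM_component_finite AE_circle_measure) auto
  moreover have "AE z in torus_measure n. z \<in> space (torus_measure n)"
    by (rule AE_space)
  ultimately show ?thesis
    by eventually_elim (auto simp: torus_def torus_measure_def space_PiM PiE_iff)
qed

lemma compact_torus: "compact (torus n)"
proof -
  define S where "S i = (if i \<in> {1..n} then sphere (0::complex) 1 else {undefined})" for i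
  have "torus n = PiE UNIV S"
  proof (intro set_eqI iffI)
    fix x assume "x \<in> PiE UNIV S"
    then have "x i \<in> S i" for i
      by (simp add: PiE_iff)
    then have "\<forall>i\<in>{1..n}. x i \<in> sphere 0 1" and "\<forall>i. i \<notin> {1..n} \<longrightarrow> x i = undefined"
      unfolding S_def by (metis, metis singletonD)
    then show "x \<in> torus n"
      by (simp add: torus_def PiE_iff extensional_def)
  qed (auto simp: torus_def S_def PiE_iff extensional_def)
  moreover have "compactin (product_topology (\<lambda>_. euclidean) UNIV) (PiE UNIV S)"
    by (subst compactin_PiE) (auto simp: S_def)
  ultimately show ?thesis
    by (simp add: euclidean_product_topology)
qed

lemma bounded_on_torus_if_continuous:
  fixes \<phi> :: "(nat \<Rightarrow> complex) \<Rightarrow> complex"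
  assumes "continuous_on (torus n) \<phi>"
  obtains C where "\<And>z. z \<in> torus n \<Longrightarrow> cmod (\<phi> z) \<le> C"
  using compact_imp_bounded[OF compact_continuous_image[OF assms compact_torus]]
  by (auto simp: bounded_iff)

lemma continuous_on_coordinate [continuous_intros]:
  "continuous_on S (\<lambda>z::'a \<Rightarrow> 'b::topological_space. z j)"
  by (rule continuous_on_subset[OF continuous_on_product_coordinates]) simp

lemma continuous_on_theta [continuous_intros]: "continuous_on S (theta m p n i)"
proof (cases "i = n")
  case True
  then show ?thesis
    by (simp add: theta_def) (intro continuous_intros)
next
  case False
  then show ?thesis
    by (simp add: theta_def) (intro continuous_intros)
qed

lemma measurable_torus_component [measurable]:
  assumes "j \<in> {1..n}"
  shows "(\<lambda>z. z j) \<in> borel_measurable (torus_measure n)"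
proof -
  have "(\<lambda>z. z j) \<in> measurable (torus_measure n) circle_measure"
    unfolding torus_measure_def using assms by (rule measurable_component_singleton)
  moreover have "measurable (torus_measure n) circle_measure = borel_measurable (torus_measure n)"
    by (rule measurable_cong_sets) simp_all
  ultimately show ?thesis
    by simp
qed

lemma measurable_theta [measurable]: "theta m p n i \<in> borel_measurable (torus_measure n)"
proof -
  have "(\<lambda>z. \<Prod>j\<in>S. z j ^ k) \<in> borel_measurable (torus_measure n)" if "S \<subseteq> {1..n}" for S k
    using that by (intro borel_measurable_prod borel_measurable_power measurable_torus_component) auto
  then show ?thesis
    unfolding theta_def by (cases "i = n") (auto intro!: borel_measurable_sum)
qed

lemma theta_eq_if_theta_map_eq:
  "theta_map m p n z = theta_map m p n w \<Longrightarrow> i \<in> {1..n} \<Longrightarrow> theta m p n i z = theta m p n i w"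
  unfolding theta_map_def by (metis restrict_apply')

section \<open>Modules over the bounded functions of theta\<close>

definition theta_multiplier :: "nat \<Rightarrow> nat \<Rightarrow> nat \<Rightarrow> ((nat \<Rightarrow> complex) \<Rightarrow> complex) \<Rightarrow> bool" where
  "theta_multiplier m p n \<phi> \<longleftrightarrow>
     \<phi> \<in> borel_measurable (torus_measure n) \<and> (\<exists>C. AE z in torus_measure n. cmod (\<phi> z) \<le> C) \<and>
     (\<forall>z w. theta_map m p n z = theta_map m p n w \<longrightarrow> \<phi> z = \<phi> w)"

lemma theta_multiplierI:
  assumes "\<phi> \<in> borel_measurable (torus_measure n)" and "continuous_on (torus n) \<phi>"
    and "\<And>z w. theta_map m p n z = theta_map m p n w \<Longrightarrow> \<phi> z = \<phi> w"
  shows "theta_multiplier m p n \<phi>"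
proof -
  obtain C where C: "\<And>z. z \<in> torus n \<Longrightarrow> cmod (\<phi> z) \<le> C"
    using bounded_on_torus_if_continuous[OF assms(2)] by blast
  have "AE z in torus_measure n. cmod (\<phi> z) \<le> C"
    using AE_torus_measure by eventually_elim (rule C)
  with assms(1,3) show ?thesis
    unfolding theta_multiplier_def by blast
qed

lemma theta_multiplier_const: "theta_multiplier m p n (\<lambda>_. c)"
  by (rule theta_multiplierI) auto

lemma theta_multiplier_theta: "i \<in> {1..n} \<Longrightarrow> theta_multiplier m p n (theta m p n i)"
  by (intro theta_multiplierI continuous_intros measurable_theta theta_eq_if_theta_map_eq)

lemma theta_multiplier_cnj:
  "theta_multiplier m p n \<phi> \<Longrightarrow> theta_multiplier m p n (\<lambda>z. cnj (\<phi> z))"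
  unfolding theta_multiplier_def complex_mod_cnj by (metis borel_measurable_cnj)

lemma theta_bezout_off_boundary:
  assumes l: "l \<in> extensional {1..n}" and off: "l \<notin> dist_boundary m p n"
  obtains b where "\<And>j. j \<in> {1..n} \<Longrightarrow> theta_multiplier m p n (b j)"
    and "AE z in torus_measure n. (\<Sum>j\<in>{1..n}. (theta m p n j z - l j) * b j z) = 1"
proof -
  define a where "a j z = theta m p n j z - l j" for j z
  define N where "N z = (\<Sum>j\<in>{1..n}. (cmod (a j z))\<^sup>2)" for z
  have N_nonzero: "N z \<noteq> 0" if z: "z \<in> torus n" for z
  proof
    assume "N z = 0"
    then have "\<forall>j\<in>{1..n}. theta m p n j z = l j"
      by (simp add: N_def a_def sum_nonneg_eq_0_iff)
    then have "theta_map m p n z = l"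
      using l by (auto simp: theta_map_def extensional_def)
    then show False
      using off z by (auto simp: dist_boundary_def)
  qed
  define b where "b j z = cnj (a j z) / of_real (N z)" for j z
  have a_fibre: "a j z = a j w" if "theta_map m p n z = theta_map m p n w" "j \<in> {1..n}" for j z w
    using theta_eq_if_theta_map_eq[OF that] by (simp add: a_def)
  have "theta_multiplier m p n (b j)" if j: "j \<in> {1..n}" for j
  proof (rule theta_multiplierI)
    show "b j \<in> borel_measurable (torus_measure n)"
      unfolding b_def N_def a_def by measurable
    have "continuous_on (torus n) N"
      unfolding N_def a_def by (intro continuous_intros)
    then show "continuous_on (torus n) (b j)"
      unfolding b_def a_def using N_nonzero by (intro continuous_intros) auto
    show "b j z = b j w" if "theta_map m p n z = theta_map m p n w" for z w
      using a_fibre[OF that] j by (simp add: b_def N_def)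
  qed
  moreover have "AE z in torus_measure n. (\<Sum>j\<in>{1..n}. (theta m p n j z - l j) * b j z) = 1"
    using AE_torus_measure
  proof eventually_elim
    case (elim z)
    have "(\<Sum>j\<in>{1..n}. a j z * cnj (a j z)) = of_real (N z)"
      unfolding N_def of_real_sum by (intro sum.cong refl) (rule complex_norm_square[symmetric])
    then show ?case
      using N_nonzero[OF elim] by (simp add: b_def a_def[symmetric] sum_divide_distrib[symmetric])
  qed
  ultimately show ?thesis
    using that by blast
qed

definition theta_module :: "nat \<Rightarrow> nat \<Rightarrow> nat \<Rightarrow> ((nat \<Rightarrow> complex) \<Rightarrow> complex) set \<Rightarrow> bool" where
  "theta_module m p n H \<longleftrightarrow> H \<subseteq> L2 (torus_measure n) \<and> (\<lambda>_. 0) \<in> H \<and>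
     (\<forall>f\<in>H. \<forall>g\<in>H. (\<lambda>x. f x + g x) \<in> H) \<and>
     (\<forall>\<phi> f. theta_multiplier m p n \<phi> \<longrightarrow> f \<in> H \<longrightarrow> (\<lambda>x. \<phi> x * f x) \<in> H)"

lemma theta_module_mult:
  "theta_module m p n H \<Longrightarrow> theta_multiplier m p n \<phi> \<Longrightarrow> f \<in> H \<Longrightarrow> (\<lambda>x. \<phi> x * f x) \<in> H"
  unfolding theta_module_def by blast

lemma taylor_spectrum_theta_module:
  assumes H: "theta_module m p n H"
  shows "taylor_spectrum (torus_measure n) H n (\<lambda>i. mult_op (theta m p n i)) \<subseteq> dist_boundary m p n"
proof (rule subsetI, rule ccontr)
  fix l assume "l \<in> taylor_spectrum (torus_measure n) H n (\<lambda>i. mult_op (theta m p n i))"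
    and off: "l \<notin> dist_boundary m p n"
  then have l: "l \<in> extensional {1..n}"
    and not_exact: "\<exists>k. \<not> koszul_exact_at (torus_measure n) H n (\<lambda>i. mult_op (theta m p n i)) l k"
    unfolding taylor_spectrum_def by auto
  obtain b where "\<And>j. j \<in> {1..n} \<Longrightarrow> theta_multiplier m p n (b j)"
    and "AE z in torus_measure n. (\<Sum>j\<in>{1..n}. (theta m p n j z - l j) * b j z) = 1"
    using theta_bezout_off_boundary[OF l off] by blast
  then have "koszul_exact_at (torus_measure n) H n (\<lambda>i. mult_op (theta m p n i)) l k" for k
    using H theta_module_mult[OF H theta_multiplier_const] theta_module_mult[OF H]
    unfolding theta_module_def by (intro koszul_exact_at_mult_op) auto
  with not_exact show False
    by blast
qed

lemma Theta_unitary_theta_module: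
  assumes H: "theta_module m p n H"
  shows "Theta_unitary m p n (torus_measure n) H (\<lambda>i. mult_op (theta m p n i))"
proof -
  have "normal_op (torus_measure n) H (mult_op (theta m p n j))" if j: "j \<in> {1..n}" for j
  proof -
    obtain C where C: "AE z in torus_measure n. cmod (theta m p n j z) \<le> C"
      using theta_multiplier_theta[OF j] unfolding theta_multiplier_def by blast
    show ?thesis
    proof (rule normal_op_mult_op[OF _ _ _ C])
      show "H \<subseteq> L2 (torus_measure n)"
        using H by (simp add: theta_module_def)
      show "mult_op (theta m p n j) f \<in> H" "mult_op (\<lambda>z. cnj (theta m p n j z)) f \<in> H"
        if "f \<in> H" for f
        unfolding mult_op_def
        using theta_module_mult[OF H _ that] theta_multiplier_theta[OF j] theta_multiplier_cnj by blast+
    qed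
  qed
  moreover have "commuting_tuple (torus_measure n) H n (\<lambda>i. mult_op (theta m p n i))"
    by (simp add: commuting_tuple_def ae_eq_def mult_op_def mult.left_commute)
  ultimately show ?thesis
    unfolding Theta_unitary_def using taylor_spectrum_theta_module[OF H] by blast
qed

lemma theta_module_L2: "theta_module m p n (L2 (torus_measure n))"
  unfolding theta_module_def
proof (intro conjI allI impI ballI subset_refl L2_zero L2_add)
  fix \<phi> f assume "theta_multiplier m p n \<phi>" and f: "f \<in> L2 (torus_measure n)"
  then obtain C where "\<phi> \<in> borel_measurable (torus_measure n)" "AE z in torus_measure n. cmod (\<phi> z) \<le> C"
    unfolding theta_multiplier_def by blast
  with f show "(\<lambda>x. \<phi> x * f x) \<in> L2 (torus_measure n)"
    by (rule L2_mult)
qed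

section \<open>The group G(m,p,n) and the isotypic components\<close>

definition monomial_matrix :: "nat \<Rightarrow> (nat \<Rightarrow> nat) \<Rightarrow> (nat \<Rightarrow> complex) \<Rightarrow> nat \<Rightarrow> nat \<Rightarrow> complex" where
  "monomial_matrix n \<pi> \<zeta> = (\<lambda>i j. if i \<in> {1..n} \<and> j = \<pi> i then \<zeta> i else 0)"

lemma Gmpn_iff:
  "\<sigma> \<in> Gmpn m p n \<longleftrightarrow> (\<exists>\<pi> \<zeta>. \<pi> permutes {1..n} \<and> (\<forall>i\<in>{1..n}. \<zeta> i ^ m = 1) \<and>
     (\<Prod>i\<in>{1..n}. \<zeta> i) ^ (m div p) = 1 \<and> \<sigma> = monomial_matrix n \<pi> \<zeta>)"
  by (simp add: Gmpn_def monomial_matrix_def)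

lemma Gmpn_entry_outside:
  "\<sigma> \<in> Gmpn m p n \<Longrightarrow> i \<notin> {1..n} \<or> j \<notin> {1..n} \<Longrightarrow> \<sigma> i j = 0"
  by (auto simp: Gmpn_iff monomial_matrix_def dest: permutes_in_image)

lemma mmult_monomial_matrix:
  assumes "\<pi> permutes {1..n}" and "i \<in> {1..n}" and "j \<in> {1..n}"
  shows "mmult n (monomial_matrix n \<pi> \<zeta>) \<tau> i j = \<zeta> i * \<tau> (\<pi> i) j"
proof -
  have "\<pi> i \<in> {1..n}"
    using assms(2) permutes_in_image[OF assms(1)] by blast
  have "mmult n (monomial_matrix n \<pi> \<zeta>) \<tau> i j = (\<Sum>k\<in>{1..n}. (if k = \<pi> i then \<zeta> i else 0) * \<tau> k j)"
    using assms(2,3) by (simp add: mmult_def monomial_matrix_def)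
  also have "\<dots> = (\<Sum>k\<in>{1..n}. if k = \<pi> i then \<zeta> i * \<tau> k j else 0)"
    by (rule sum.cong) auto
  finally show ?thesis
    using \<open>\<pi> i \<in> {1..n}\<close> by simp
qed

lemma mvec_monomial_matrix:
  assumes "\<pi> permutes {1..n}" and "j \<in> {1..n}"
  shows "mvec n (monomial_matrix n \<pi> \<zeta>) z j = \<zeta> j * z (\<pi> j)"
proof -
  have "\<pi> j \<in> {1..n}"
    using assms(2) permutes_in_image[OF assms(1)] by blast
  have "mvec n (monomial_matrix n \<pi> \<zeta>) z j = (\<Sum>k\<in>{1..n}. (if k = \<pi> j then \<zeta> j else 0) * z k)"
    using assms(2) by (simp add: mvec_def monomial_matrix_def)
  also have "\<dots> = (\<Sum>k\<in>{1..n}. if k = \<pi> j then \<zeta> j * z k else 0)"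
    by (rule sum.cong) auto
  finally show ?thesis
    using \<open>\<pi> j \<in> {1..n}\<close> by simp
qed

lemma monomial_matrix_mmult_cancel:
  assumes \<pi>: "\<pi> permutes {1..n}" and \<zeta>: "\<And>i. i \<in> {1..n} \<Longrightarrow> \<zeta> i \<noteq> 0"
    and \<tau>: "\<And>k j. k \<notin> {1..n} \<or> j \<notin> {1..n} \<Longrightarrow> \<tau> k j = 0"
    and \<tau>': "\<And>k j. k \<notin> {1..n} \<or> j \<notin> {1..n} \<Longrightarrow> \<tau>' k j = 0"
    and eq: "mmult n (monomial_matrix n \<pi> \<zeta>) \<tau> = mmult n (monomial_matrix n \<pi> \<zeta>) \<tau>'"
  shows "\<tau> = \<tau>'"
proof (intro ext)
  fix k j
  show "\<tau> k j = \<tau>' k j"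
  proof (cases "k \<in> {1..n} \<and> j \<in> {1..n}")
    case True
    define i where "i = inv \<pi> k"
    have i: "i \<in> {1..n}" "\<pi> i = k"
      using True permutes_in_image[OF permutes_inv[OF \<pi>]] permutes_inverses(1)[OF \<pi>]
      by (auto simp: i_def)
    then have "\<zeta> i * \<tau> k j = \<zeta> i * \<tau>' k j"
      using fun_cong[OF fun_cong[OF eq], of i j] True by (simp add: mmult_monomial_matrix[OF \<pi>])
    then show ?thesis
      using \<zeta>[OF i(1)] by simp
  qed (use \<tau> \<tau>' in auto)
qed

lemma mmult_monomial_matrix_inverse:
  assumes \<pi>: "\<pi> permutes {1..n}" and \<zeta>: "\<And>i. i \<in> {1..n} \<Longrightarrow> \<zeta> i \<noteq> 0"
  shows "mmult n (monomial_matrix n \<pi> \<zeta>) (monomial_matrix n (inv \<pi>) (\<lambda>i. inverse (\<zeta> (inv \<pi> i)))) = idm n"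
proof (intro ext)
  fix i j
  show "mmult n (monomial_matrix n \<pi> \<zeta>) (monomial_matrix n (inv \<pi>) (\<lambda>i. inverse (\<zeta> (inv \<pi> i)))) i j = idm n i j"
  proof (cases "i \<in> {1..n} \<and> j \<in> {1..n}")
    case True
    then have "mmult n (monomial_matrix n \<pi> \<zeta>) (monomial_matrix n (inv \<pi>) (\<lambda>i. inverse (\<zeta> (inv \<pi> i)))) i j
        = \<zeta> i * monomial_matrix n (inv \<pi>) (\<lambda>i. inverse (\<zeta> (inv \<pi> i))) (\<pi> i) j"
      by (simp add: mmult_monomial_matrix[OF \<pi>])
    moreover have "\<pi> i \<in> {1..n}"
      using True permutes_in_image[OF \<pi>] by blast
    ultimately show ?thesis
      using True \<zeta>[of i] permutes_inverses(2)[OF \<pi>] by (simp add: monomial_matrix_def idm_def)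
  qed (auto simp: mmult_def idm_def)
qed

lemma ginv_Gmpn:
  assumes "0 < m" and \<sigma>: "\<sigma> \<in> Gmpn m p n"
  shows "ginv n (Gmpn m p n) \<sigma> \<in> Gmpn m p n"
proof -
  obtain \<pi> \<zeta> where \<pi>: "\<pi> permutes {1..n}" and roots: "\<forall>i\<in>{1..n}. \<zeta> i ^ m = 1"
    and det: "(\<Prod>i\<in>{1..n}. \<zeta> i) ^ (m div p) = 1" and \<sigma>_eq: "\<sigma> = monomial_matrix n \<pi> \<zeta>"
    using \<sigma> by (auto simp: Gmpn_iff)
  have \<zeta>_nonzero: "\<zeta> i \<noteq> 0" if "i \<in> {1..n}" for i
    using roots that \<open>0 < m\<close> by (metis power_0_left zero_neq_one neq0_conv)
  have inv_\<pi>: "inv \<pi> permutes {1..n}"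
    using \<pi> by (rule permutes_inv)
  define \<tau> where "\<tau> = monomial_matrix n (inv \<pi>) (\<lambda>i. inverse (\<zeta> (inv \<pi> i)))"
  have "(\<Prod>i\<in>{1..n}. inverse (\<zeta> (inv \<pi> i))) = inverse (\<Prod>i\<in>{1..n}. \<zeta> i)"
    using prod.permute[OF inv_\<pi>, of \<zeta>] prod_inversef[of "\<lambda>i. \<zeta> (inv \<pi> i)" "{1..n}"]
    by (simp add: comp_def)
  then have \<tau>_in: "\<tau> \<in> Gmpn m p n"
    unfolding Gmpn_iff \<tau>_def using inv_\<pi> roots det permutes_in_image[OF inv_\<pi>]
    by (intro exI conjI) (auto simp: power_inverse)
  have \<tau>_right_inverse: "mmult n \<sigma> \<tau> = idm n"
    unfolding \<sigma>_eq \<tau>_def using \<pi> \<zeta>_nonzero by (rule mmult_monomial_matrix_inverse)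
  have "ginv n (Gmpn m p n) \<sigma> = \<tau>"
    unfolding ginv_def
  proof (rule the_equality)
    fix \<tau>' assume \<tau>': "\<tau>' \<in> Gmpn m p n \<and> mmult n \<sigma> \<tau>' = idm n"
    show "\<tau>' = \<tau>"
    proof (rule monomial_matrix_mmult_cancel[OF \<pi> \<zeta>_nonzero])
      show "\<tau>' k j = 0" if "k \<notin> {1..n} \<or> j \<notin> {1..n}" for k j
        using Gmpn_entry_outside \<tau>' that by blast
      show "\<tau> k j = 0" if "k \<notin> {1..n} \<or> j \<notin> {1..n}" for k j
        using Gmpn_entry_outside[OF \<tau>_in that] .
      show "mmult n (monomial_matrix n \<pi> \<zeta>) \<tau>' = mmult n (monomial_matrix n \<pi> \<zeta>) \<tau>"
        using \<tau>' \<tau>_right_inverse by (simp add: \<sigma>_eq)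
    qed
  qed (use \<tau>_in \<tau>_right_inverse in blast)
  with \<tau>_in show ?thesis
    by simp
qed

lemma sum_subsets_prod_permute:
  assumes \<pi>: "\<pi> permutes U"
  shows "(\<Sum>S\<in>{S. S \<subseteq> U \<and> card S = k}. \<Prod>j\<in>S. f (\<pi> j)) = (\<Sum>S\<in>{S. S \<subseteq> U \<and> card S = k}. \<Prod>j\<in>S. f j)"
proof -
  have inj: "inj \<pi>"
    using \<pi> by (rule permutes_inj)
  have "bij_betw ((`) \<pi>) {S. S \<subseteq> U \<and> card S = k} {S. S \<subseteq> U \<and> card S = k}"
  proof (rule bij_betw_byWitness[where f' = "(`) (inv \<pi>)"])
    show "\<forall>S\<in>{S. S \<subseteq> U \<and> card S = k}. inv \<pi> ` \<pi> ` S = S"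
      using inj by (simp add: image_comp)
    show "\<forall>S\<in>{S. S \<subseteq> U \<and> card S = k}. \<pi> ` inv \<pi> ` S = S"
      using permutes_surj[OF \<pi>] by (simp add: image_comp surj_iff)
    show "(`) \<pi> ` {S. S \<subseteq> U \<and> card S = k} \<subseteq> {S. S \<subseteq> U \<and> card S = k}"
      using permutes_image[OF \<pi>] card_image[OF inj_on_subset[OF inj]] by auto
    show "(`) (inv \<pi>) ` {S. S \<subseteq> U \<and> card S = k} \<subseteq> {S. S \<subseteq> U \<and> card S = k}"
      using permutes_image[OF permutes_inv[OF \<pi>]]
        card_image[OF inj_on_subset[OF permutes_inj[OF permutes_inv[OF \<pi>]]]] by auto
  qed
  moreover have "(\<Prod>j\<in>S. f (\<pi> j)) = (\<Prod>j\<in>\<pi> ` S. f j)" for S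
    using inj by (simp add: prod.reindex inj_on_subset)
  ultimately show ?thesis
    by (simp add: sum.reindex_bij_betw)
qed

lemma theta_mvec_Gmpn:
  assumes "\<tau> \<in> Gmpn m p n"
  shows "theta m p n i (mvec n \<tau> z) = theta m p n i z"
proof -
  obtain \<pi> \<zeta> where \<pi>: "\<pi> permutes {1..n}" and roots: "\<forall>i\<in>{1..n}. \<zeta> i ^ m = 1"
    and det: "(\<Prod>i\<in>{1..n}. \<zeta> i) ^ (m div p) = 1" and \<tau>_eq: "\<tau> = monomial_matrix n \<pi> \<zeta>"
    using assms by (auto simp: Gmpn_iff)
  have coords: "mvec n \<tau> z j = \<zeta> j * z (\<pi> j)" if "j \<in> {1..n}" for j
    using mvec_monomial_matrix[OF \<pi> that] by (simp add: \<tau>_eq)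
  show ?thesis
  proof (cases "i = n")
    case True
    have "(\<Prod>j\<in>{1..n}. mvec n \<tau> z j) = (\<Prod>j\<in>{1..n}. \<zeta> j) * (\<Prod>j\<in>{1..n}. z (\<pi> j))"
      using coords by (simp add: prod.distrib)
    also have "(\<Prod>j\<in>{1..n}. z (\<pi> j)) = (\<Prod>j\<in>{1..n}. z j)"
      using prod.permute[OF \<pi>, of z] by (simp add: comp_def)
    finally show ?thesis
      using True det by (simp add: theta_def power_mult_distrib)
  next
    case False
    have "(\<Prod>j\<in>S. mvec n \<tau> z j ^ m) = (\<Prod>j\<in>S. z (\<pi> j) ^ m)" if "S \<subseteq> {1..n}" for S
      using that coords roots by (intro prod.cong) (auto simp: power_mult_distrib)
    then show ?thesis
      using False sum_subsets_prod_permute[OF \<pi>, where k = i and f = "\<lambda>j. z j ^ m"] by (simp add: theta_def)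
  qed
qed

lemma theta_map_gact_Gmpn:
  assumes "0 < m" and "\<sigma> \<in> Gmpn m p n"
  shows "theta_map m p n (gact n (Gmpn m p n) \<sigma> z) = theta_map m p n z"
  using theta_mvec_Gmpn[OF ginv_Gmpn[OF assms]] by (simp add: gact_def theta_map_def)

lemma isotypic_proj_mult_theta_multiplier:
  assumes "0 < m" and \<phi>: "theta_multiplier m p n \<phi>"
  shows "isotypic_proj n (Gmpn m p n) \<rho> (\<lambda>x. \<phi> x * f x) z = \<phi> z * isotypic_proj n (Gmpn m p n) \<rho> f z"
proof -
  let ?G = "Gmpn m p n"
  have "\<phi> (gact n ?G (ginv n ?G \<sigma>) z) = \<phi> z" if "\<sigma> \<in> ?G" for \<sigma>
    using \<phi> theta_map_gact_Gmpn[OF \<open>0 < m\<close> ginv_Gmpn[OF \<open>0 < m\<close> that]]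
    unfolding theta_multiplier_def by blast
  then show ?thesis
    unfolding isotypic_proj_def by (simp add: sum_distrib_left mult_ac cong: sum.cong)
qed

lemma theta_module_isotypic_range:
  fixes \<rho> :: "(nat \<Rightarrow> nat \<Rightarrow> complex) \<Rightarrow> complex^'d^'d"
  assumes "0 < m"
  shows "theta_module m p n (isotypic_range n (Gmpn m p n) \<rho>)"
  unfolding theta_module_def
proof (intro conjI allI impI ballI)
  let ?M = "torus_measure n" and ?P = "isotypic_proj n (Gmpn m p n) \<rho>"
    and ?R = "isotypic_range n (Gmpn m p n) \<rho>"
  have range_iff: "g \<in> ?R \<longleftrightarrow> g \<in> L2 ?M \<and> (\<exists>f\<in>L2 ?M. AE x in ?M. g x = ?P f x)" for g
    by (simp add: isotypic_range_def ae_eq_def)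
  show "?R \<subseteq> L2 ?M"
    by (auto simp: range_iff)
  show "(\<lambda>_. 0) \<in> ?R"
    unfolding range_iff using L2_zero by (auto simp: isotypic_proj_def intro!: bexI[of _ "\<lambda>_. 0"])
  show "(\<lambda>x. g x + g' x) \<in> ?R" if g: "g \<in> ?R" and g': "g' \<in> ?R" for g g'
  proof -
    obtain f f' where f: "f \<in> L2 ?M" "AE x in ?M. g x = ?P f x"
      and f': "f' \<in> L2 ?M" "AE x in ?M. g' x = ?P f' x"
      using g g' unfolding range_iff by blast
    have "AE x in ?M. g x + g' x = ?P (\<lambda>x. f x + f' x) x"
      using f(2) f'(2) by eventually_elim (simp add: isotypic_proj_def distrib_left sum.distrib)
    then show ?thesis
      using g g' L2_add[OF f(1) f'(1)] unfolding range_iff by (blast intro: L2_add)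
  qed
  show "(\<lambda>x. \<phi> x * g x) \<in> ?R" if \<phi>: "theta_multiplier m p n \<phi>" and g: "g \<in> ?R" for \<phi> g
  proof -
    obtain f where f: "f \<in> L2 ?M" "AE x in ?M. g x = ?P f x"
      using g unfolding range_iff by blast
    have "AE x in ?M. \<phi> x * g x = ?P (\<lambda>x. \<phi> x * f x) x"
      using f(2) by eventually_elim (simp add: isotypic_proj_mult_theta_multiplier[OF \<open>0 < m\<close> \<phi>])
    moreover have "(\<lambda>x. \<phi> x * g x) \<in> L2 ?M" "(\<lambda>x. \<phi> x * f x) \<in> L2 ?M"
      using theta_module_mult[OF theta_module_L2 \<phi>] g f(1) unfolding range_iff by blast+
    ultimately show ?thesis
      unfolding range_iff by blast
  qed
qed

theorem theorem4p14:
  fixes m p n :: nat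
  assumes "0 < m" and "0 < p" and "p dvd m" and "1 < n"
  shows "Theta_unitary m p n (torus_measure n) (L2 (torus_measure n)) (\<lambda>i. mult_op (theta m p n i))
       \<and> (\<forall>\<rho> :: (nat \<Rightarrow> nat \<Rightarrow> complex) \<Rightarrow> complex^'d^'d.
            is_irrep n (Gmpn m p n) \<rho> \<longrightarrow>
            Theta_unitary m p n (torus_measure n) (isotypic_range n (Gmpn m p n) \<rho>)
              (\<lambda>i. mult_op (theta m p n i)))"
  using Theta_unitary_theta_module[OF theta_module_L2]
    Theta_unitary_theta_module[OF theta_module_isotypic_range[OF \<open>0 < m\<close>]]
  by blast

end
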